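(* Let $\gamma(t)$ be a curve on $S^{n-1}$, put $\omega=\frac1\varepsilon\gamma\wedge\dot\gamma$, and suppose there is $\lambda_0(t)\in so(n)$ orthogonal to $\mathbb R^n\wedge\gamma$ such that $$\frac{d}{dt}(\mathbf I\omega)=[\mathbf I\omega,\omega]+[\kappa,\omega]+\lambda_0,\qquad \dot\gamma=-\varepsilon\omega\gamma.$$ Then for all $t$ and all $\delta\gamma\in T_\gamma S^{n-1}$, $$\delta l-\mathbf{JK}(\dot\gamma,\delta\gamma)=\Big\langle\frac1{\varepsilon^2}\mathbf I(\gamma\wedge\ddot\gamma)\gamma+\frac1{\varepsilon^3}\mathbf I(\gamma\wedge\dot\gamma)\dot\gamma,\delta\gamma\Big\rangle=\mathbf f(\dot\gamma,\delta\gamma),$$ where $\delta l=\big\langle\frac{\partial l}{\partial\gamma}-\frac d{dt}\frac{\partial l}{\partial\dot\gamma},\delta\gamma\big\rangle$ and $\mathbf f(\dot\gamma,\delta\gamma)=\frac1{\varepsilon^2}\langle\dot\gamma,\kappa\delta\gamma\rangle$.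
   Context: Model of a balanced $n$-dimensional ball with a gyroscope rolling without slipping and twisting over a fixed sphere in $\mathbb R^n$ ($n\ge3$): the ball has radius $a$, mass $m$, $D=ma^2$; the sphere has radius $b$; $\varepsilon=b/(b+a)$ (ball outside the sphere) or $\varepsilon=b/(b-a)$ (ball inside the sphere, or spherical shell over a smaller sphere). On $so(n)$ use $\langle X,Y\rangle=-\frac12\operatorname{tr}(XY)$; on $\mathbb R^n$ the Euclidean product. For $x,y\in\mathbb R^n$, $x\wedge y=xy^T-yx^T\in so(n)$. $\mathbb I\colon so(n)\to so(n)$ is the inertia operator of the system and $\mathbf I=\mathbb I+D\,\mathrm{Id}_{so(n)}$, a symmetric positive definite operator; $\kappa\in so(n)$ is a fixed matrix (the gyroscope). The reduced Lagrangian on $TS^{n-1}$ is $l(\gamma,\dot\gamma)=-\frac1{2\varepsilon^2}\langle\mathbf I(\gamma\wedge\dot\gamma)\gamma,\dot\gamma\rangle$ and the $\mathbf{JK}$-term is $\mathbf{JK}(\dot\gamma,\delta\gamma)=\frac{2\varepsilon-1}{\varepsilon^3}\langle\mathbf I(\gamma\wedge\dot\gamma)\dot\gamma,\delta\gamma\rangle$. *)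

theory Defs
  imports "HOL-Analysis.Analysis"
begin

type_synonym 'n mat = "real^'n^'n"

definition so :: "'n::finite mat set" where
  "so = {X. transpose X = - X}"

definition so_inner :: "'n::finite mat \<Rightarrow> 'n mat \<Rightarrow> real" where
  "so_inner X Y = - (1/2) * trace (X ** Y)"

definition wedge :: "real^'n::finite \<Rightarrow> real^'n \<Rightarrow> 'n mat" where
  "wedge x y = (\<chi> i j. x$i * y$j - y$i * x$j)"

definition comm :: "'n::finite mat \<Rightarrow> 'n mat \<Rightarrow> 'n mat" where
  "comm X Y = X ** Y - Y ** X"

definition partial1 :: "(real^'n::finite \<Rightarrow> real^'n \<Rightarrow> real) \<Rightarrow> real^'n \<Rightarrow> real^'n \<Rightarrow> real^'n" where
  "partial1 L x v = (THE p. ((\<lambda>y. L y v) has_derivative (\<lambda>h. p \<bullet> h)) (at x))"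

definition partial2 :: "(real^'n::finite \<Rightarrow> real^'n \<Rightarrow> real) \<Rightarrow> real^'n \<Rightarrow> real^'n \<Rightarrow> real^'n" where
  "partial2 L x v = (THE p. ((\<lambda>w. L x w) has_derivative (\<lambda>h. p \<bullet> h)) (at v))"

definition delta_l :: "(real^'n::finite \<Rightarrow> real^'n \<Rightarrow> real) \<Rightarrow> (real \<Rightarrow> real^'n) \<Rightarrow> (real \<Rightarrow> real^'n)
    \<Rightarrow> real \<Rightarrow> real^'n \<Rightarrow> real" where
  "delta_l L g g' t dg =
     (partial1 L (g t) (g' t) - vector_derivative (\<lambda>s. partial2 L (g s) (g' s)) (at t)) \<bullet> dg"

definition boldI :: "('n::finite mat \<Rightarrow> 'n mat) \<Rightarrow> real \<Rightarrow> 'n mat \<Rightarrow> 'n mat" where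
  "boldI II D X = II X + D *\<^sub>R X"

definition lagr :: "('n::finite mat \<Rightarrow> 'n mat) \<Rightarrow> real \<Rightarrow> real^'n \<Rightarrow> real^'n \<Rightarrow> real" where
  "lagr IB \<epsilon> g v = - (1 / (2 * \<epsilon>^2)) * ((IB (wedge g v) *v g) \<bullet> v)"

definition JK :: "('n::finite mat \<Rightarrow> 'n mat) \<Rightarrow> real \<Rightarrow> real^'n \<Rightarrow> real^'n \<Rightarrow> real^'n \<Rightarrow> real" where
  "JK IB \<epsilon> g v dg = ((2*\<epsilon> - 1) / \<epsilon>^3) * ((IB (wedge g v) *v v) \<bullet> dg)"

definition gyro_f :: "'n::finite mat \<Rightarrow> real \<Rightarrow> real^'n \<Rightarrow> real^'n \<Rightarrow> real" where
  "gyro_f \<kappa> \<epsilon> v dg = (1 / \<epsilon>^2) * (v \<bullet> (\<kappa> *v dg))"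

end

theory Submission
  imports Defs
begin

text \<open>
  For a skew matrix X one has \<open>(X x) \<bullet> y = - so_inner X (wedge x y)\<close>, so the reduced
  Lagrangian is the quadratic form \<open>so_inner (I (\<gamma> \<and> \<gamma>')) (\<gamma> \<and> \<gamma>') / (2 \<epsilon>\<^sup>2)\<close>, and the
  symmetry of I gives \<open>\<partial>l/\<partial>\<gamma> = I(\<gamma> \<and> \<gamma>') \<gamma>' / \<epsilon>\<^sup>2\<close> and \<open>\<partial>l/\<partial>\<gamma>' = - I(\<gamma> \<and> \<gamma>') \<gamma> / \<epsilon>\<^sup>2\<close>.
  Differentiating the latter along the curve yields the first identity for every curve.
  For the second one, substitute \<open>I(\<gamma> \<and> \<gamma>'') = \<epsilon> ([I \<omega>, \<omega>] + [\<kappa>, \<omega>] + \<lambda>\<^sub>0)\<close> and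
  \<open>\<omega> \<gamma> = - \<gamma>' / \<epsilon>\<close>: \<open>\<lambda>\<^sub>0 \<gamma> = 0\<close> because \<open>\<lambda>\<^sub>0\<close> is orthogonal to all \<open>x \<and> \<gamma>\<close>, and for
  \<open>\<delta>\<gamma> \<bottom> \<gamma>\<close> the pairing \<open>(\<omega> y) \<bullet> \<delta>\<gamma>\<close> is proportional to \<open>\<gamma> \<bullet> y\<close>, which kills
  \<open>\<omega> (I \<omega>) \<gamma>\<close> and \<open>\<omega> \<kappa> \<gamma>\<close>. The two \<open>(I \<omega>) \<gamma>'\<close> terms cancel and only
  \<open>(\<kappa> \<omega> \<gamma>) \<bullet> \<delta>\<gamma> / \<epsilon> = f(\<gamma>', \<delta>\<gamma>)\<close> remains.
\<close>

lemma matrix_vector_mult_uminus_left: "(- A) *v x = - (A *v (x::'a::ring_1^'n))"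
  by (simp add: matrix_vector_mult_def vec_eq_iff sum_negf)

lemma matrix_vector_mult_uminus_right: "A *v (- x) = - (A *v (x::'a::ring_1^'n))"
  by (simp add: matrix_vector_mult_def vec_eq_iff sum_negf)

lemma transpose_add: "transpose (X + Y) = transpose X + transpose (Y::'a::semiring_1^'n^'m)"
  by (simp add: transpose_def vec_eq_iff)

lemma transpose_diff: "transpose (X - Y) = transpose X - transpose (Y::'a::ring_1^'n^'m)"
  by (simp add: transpose_def vec_eq_iff)

lemma comm_mult_vec: "comm X Y *v z = X *v (Y *v z) - Y *v (X *v (z::real^'n::finite))"
  by (simp add: comm_def matrix_vector_mult_diff_rdistrib matrix_vector_mul_assoc)

lemma bounded_bilinear_matrix_vector_mult:
  "bounded_bilinear ((*v) :: real^'n::finite^'m::finite \<Rightarrow> _)"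
  unfolding bilinear_conv_bounded_bilinear[symmetric] bilinear_def
  by (auto intro!: linearI simp: matrix_vector_mult_def vec_eq_iff algebra_simps
      sum.distrib sum_distrib_left)

lemma so_skew: "X \<in> so \<Longrightarrow> transpose X = - X"
  by (simp add: so_def)

lemma so_add: "X \<in> so \<Longrightarrow> Y \<in> so \<Longrightarrow> X + Y \<in> so"
  by (simp add: so_def transpose_add)

lemma so_scaleR: "X \<in> so \<Longrightarrow> c *\<^sub>R X \<in> so"
  by (simp add: so_def transpose_scalar)

lemma so_inner_commute: "so_inner X Y = so_inner Y X"
  unfolding so_inner_def by (metis trace_mul_sym)

lemma skew_mult_vec_inner:
  fixes X :: "real^'n::finite^'n"
  assumes "transpose X = - X"
  shows "(X *v x) \<bullet> y = - ((X *v y) \<bullet> x)"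
proof -
  have "(X *v x) \<bullet> y = x \<bullet> (transpose X *v y)"
    by (metis dot_lmul_matrix vector_transpose_matrix)
  then show ?thesis
    by (simp add: assms matrix_vector_mult_uminus_left inner_commute)
qed

lemma skew_mult_vec_inner_self:
  fixes X :: "real^'n::finite^'n"
  shows "transpose X = - X \<Longrightarrow> (X *v x) \<bullet> x = 0"
  using skew_mult_vec_inner[of X x x] by simp

lemma wedge_in_so: "wedge x y \<in> so"
  by (simp add: so_def wedge_def transpose_def vec_eq_iff)

lemma wedge_self [simp]: "wedge x x = 0"
  by (simp add: wedge_def vec_eq_iff)

lemma wedge_mult_vec: "wedge x y *v z = (y \<bullet> z) *\<^sub>R x - (x \<bullet> z) *\<^sub>R y"
  by (simp add: wedge_def vec_eq_iff matrix_vector_mult_def inner_vec_def algebra_simps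
      sum_subtractf sum_distrib_left)

lemma bounded_bilinear_wedge: "bounded_bilinear (wedge :: real^'n::finite \<Rightarrow> _)"
  unfolding bilinear_conv_bounded_bilinear[symmetric] bilinear_def
  by (auto intro!: linearI simp: wedge_def vec_eq_iff algebra_simps)

lemma skew_mult_vec_inner_eq_so_inner_wedge:
  fixes X :: "real^'n::finite^'n"
  assumes "transpose X = - X"
  shows "(X *v x) \<bullet> y = - so_inner X (wedge x y)"
proof -
  have "trace (X ** wedge x y) = (X *v x) \<bullet> y - (X *v y) \<bullet> x"
    by (simp add: trace_def matrix_matrix_mult_def wedge_def matrix_vector_mult_def inner_vec_def
        algebra_simps sum_subtractf sum_distrib_left sum_distrib_right)
  then show ?thesis
    using skew_mult_vec_inner[OF assms, of x y] by (simp add: so_inner_def)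
qed

lemma so_mult_vec_eq_0_if_orthogonal_wedges:
  assumes "X \<in> so" and "\<forall>y. so_inner X (wedge y x) = 0"
  shows "X *v x = 0"
proof -
  have "(X *v x) \<bullet> y = 0" for y
    using assms skew_mult_vec_inner[OF so_skew, of X x y]
      skew_mult_vec_inner_eq_so_inner_wedge[OF so_skew, of X y x] by simp
  then show ?thesis
    by (metis inner_eq_zero_iff)
qed

definition skew_part :: "'n::finite mat \<Rightarrow> 'n mat" where
  "skew_part X = (1/2) *\<^sub>R (X - transpose X)"

lemma skew_part_in_so: "skew_part X \<in> so"
  by (simp add: so_def skew_part_def transpose_scalar transpose_diff algebra_simps)

lemma skew_part_so: "X \<in> so \<Longrightarrow> skew_part X = X"
  by (simp add: so_def skew_part_def)

lemma skew_part_add: "skew_part (X + Y) = skew_part X + skew_part Y"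
  by (simp add: skew_part_def transpose_add algebra_simps)

lemma skew_part_scaleR: "skew_part (c *\<^sub>R X) = c *\<^sub>R skew_part X"
  by (simp add: skew_part_def transpose_scalar algebra_simps)

lemma gradient_eqI:
  fixes p :: "'a::real_inner"
  assumes "(f has_derivative (\<lambda>h. p \<bullet> h)) (at x)"
  shows "(THE p. (f has_derivative (\<lambda>h. p \<bullet> h)) (at x)) = p"
proof (rule the_equality)
  fix q assume "(f has_derivative (\<lambda>h. q \<bullet> h)) (at x)"
  then have "(\<lambda>h. q \<bullet> h) = (\<lambda>h. p \<bullet> h)"
    using assms by (rule has_derivative_unique)
  then have "(q - p) \<bullet> (q - p) = 0"
    by (simp add: inner_diff_left)
  then show "q = p" by simp
qed (fact assms)

locale inertia_operator =
  fixes A :: "'n::finite mat \<Rightarrow> 'n mat"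
  assumes maps_so: "X \<in> so \<Longrightarrow> A X \<in> so"
    and add: "X \<in> so \<Longrightarrow> Y \<in> so \<Longrightarrow> A (X + Y) = A X + A Y"
    and scaleR: "X \<in> so \<Longrightarrow> A (c *\<^sub>R X) = c *\<^sub>R A X"
    and symmetric: "X \<in> so \<Longrightarrow> Y \<in> so \<Longrightarrow> so_inner (A X) Y = so_inner X (A Y)"
begin

text \<open>
  The inertia operator is only given on so(n); precomposing it with the skew part extends it
  to a bounded linear map on all matrices, to which the calculus library applies.
\<close>

lemma bounded_linear_skew_extension: "bounded_linear (\<lambda>X. A (skew_part X))"
  by (rule bounded_linearI')
    (simp_all add: skew_part_add skew_part_scaleR add scaleR skew_part_in_so)

lemma skew_extension_wedge [simp]: "A (skew_part (wedge x y)) = A (wedge x y)"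
  by (simp add: skew_part_so wedge_in_so)

lemma skew_wedge: "transpose (A (wedge x y)) = - A (wedge x y)"
  by (rule so_skew[OF maps_so[OF wedge_in_so]])

lemma inner_wedge_mult_vec_swap: "(A (wedge h v) *v x) \<bullet> w = (A (wedge x w) *v h) \<bullet> v"
proof -
  have "(A (wedge h v) *v x) \<bullet> w = - so_inner (A (wedge h v)) (wedge x w)"
    by (rule skew_mult_vec_inner_eq_so_inner_wedge[OF skew_wedge])
  also have "\<dots> = - so_inner (A (wedge x w)) (wedge h v)"
    by (metis symmetric wedge_in_so so_inner_commute)
  also have "\<dots> = (A (wedge x w) *v h) \<bullet> v"
    by (rule skew_mult_vec_inner_eq_so_inner_wedge[OF skew_wedge, symmetric])
  finally show ?thesis .
qed

lemma lagr_skew_extension: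
  "lagr A \<epsilon> x v = - (1 / (2 * \<epsilon>^2)) * ((A (skew_part (wedge x v)) *v x) \<bullet> v)"
  by (simp add: lagr_def)

lemma has_derivative_skew_extension_wedge_left:
  "((\<lambda>x. A (skew_part (wedge x v))) has_derivative (\<lambda>h. A (skew_part (wedge h v)))) (at x)"
  by (rule bounded_linear_imp_has_derivative, rule bounded_linear_compose
      [OF bounded_linear_skew_extension
        bounded_bilinear.bounded_linear_left[OF bounded_bilinear_wedge]])

lemma has_derivative_skew_extension_wedge_right:
  "((\<lambda>v. A (skew_part (wedge x v))) has_derivative (\<lambda>h. A (skew_part (wedge x h)))) (at v)"
  by (rule bounded_linear_imp_has_derivative, rule bounded_linear_compose
      [OF bounded_linear_skew_extension
        bounded_bilinear.bounded_linear_right[OF bounded_bilinear_wedge]])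

lemma partial1_lagr: "partial1 (lagr A \<epsilon>) x v = (1/\<epsilon>^2) *\<^sub>R (A (wedge x v) *v v)"
proof -
  have "((\<lambda>y. lagr A \<epsilon> y v) has_derivative (\<lambda>h. - (1 / (2 * \<epsilon>^2)) *
      ((A (skew_part (wedge x v)) *v h + A (skew_part (wedge h v)) *v x) \<bullet> v))) (at x)"
    unfolding lagr_skew_extension
    by (intro derivative_intros bounded_bilinear.FDERIV[OF bounded_bilinear_matrix_vector_mult]
        has_derivative_skew_extension_wedge_left)
  moreover have "- (1 / (2 * \<epsilon>^2)) *
      ((A (skew_part (wedge x v)) *v h + A (skew_part (wedge h v)) *v x) \<bullet> v)
      = ((1/\<epsilon>^2) *\<^sub>R (A (wedge x v) *v v)) \<bullet> h" for h
    using inner_wedge_mult_vec_swap[of h v x v] skew_mult_vec_inner[OF skew_wedge, of x v h v]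
    by (simp add: inner_add_left)
  ultimately show ?thesis
    unfolding partial1_def by (intro gradient_eqI) simp
qed

lemma partial2_lagr: "partial2 (lagr A \<epsilon>) x v = - (1/\<epsilon>^2) *\<^sub>R (A (wedge x v) *v x)"
proof -
  have "((\<lambda>w. lagr A \<epsilon> x w) has_derivative (\<lambda>h. - (1 / (2 * \<epsilon>^2)) *
      ((A (skew_part (wedge x v)) *v x) \<bullet> h + (A (skew_part (wedge x h)) *v x) \<bullet> v))) (at v)"
  proof -
    have "((\<lambda>w. A (skew_part (wedge x w)) *v x) has_derivative
        (\<lambda>h. A (skew_part (wedge x h)) *v x)) (at v)"
      using bounded_bilinear.FDERIV[OF bounded_bilinear_matrix_vector_mult
          has_derivative_skew_extension_wedge_right has_derivative_const] by simp
    then show ?thesis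
      unfolding lagr_skew_extension
      by (intro derivative_intros bounded_bilinear.FDERIV[OF bounded_bilinear_inner])
  qed
  moreover have "- (1 / (2 * \<epsilon>^2)) *
      ((A (skew_part (wedge x v)) *v x) \<bullet> h + (A (skew_part (wedge x h)) *v x) \<bullet> v)
      = (- (1/\<epsilon>^2) *\<^sub>R (A (wedge x v) *v x)) \<bullet> h" for h
    using inner_wedge_mult_vec_swap[of x h x v] by simp
  ultimately show ?thesis
    unfolding partial2_def by (intro gradient_eqI) simp
qed

lemma has_vector_derivative_wedge_curve:
  assumes "(\<gamma> has_vector_derivative v t) (at t)" and "(v has_vector_derivative a) (at t)"
  shows "((\<lambda>s. A (c *\<^sub>R wedge (\<gamma> s) (v s))) has_vector_derivative
      c *\<^sub>R A (wedge (\<gamma> t) a)) (at t)"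
proof -
  have "((\<lambda>s. wedge (\<gamma> s) (v s)) has_vector_derivative wedge (\<gamma> t) a + wedge (v t) (v t)) (at t)"
    by (rule bounded_bilinear.has_vector_derivative[OF bounded_bilinear_wedge assms])
  from bounded_linear.has_vector_derivative[OF bounded_linear_skew_extension this]
  have "((\<lambda>s. c *\<^sub>R A (skew_part (wedge (\<gamma> s) (v s)))) has_vector_derivative
      c *\<^sub>R A (skew_part (wedge (\<gamma> t) a))) (at t)"
    using bounded_linear.has_vector_derivative[OF bounded_linear_scaleR_right] by simp
  then show ?thesis
    by (simp add: scaleR wedge_in_so)
qed

lemma has_vector_derivative_partial2_lagr:
  assumes "(\<gamma> has_vector_derivative v t) (at t)" and "(v has_vector_derivative a) (at t)"
  shows "((\<lambda>s. partial2 (lagr A \<epsilon>) (\<gamma> s) (v s)) has_vector_derivative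
      - (1/\<epsilon>^2) *\<^sub>R (A (wedge (\<gamma> t) a) *v \<gamma> t + A (wedge (\<gamma> t) (v t)) *v v t)) (at t)"
  unfolding partial2_lagr
  using bounded_linear.has_vector_derivative[OF bounded_linear_scaleR_right[of "- (1/\<epsilon>^2)"],
      OF bounded_bilinear.has_vector_derivative[OF bounded_bilinear_matrix_vector_mult
        has_vector_derivative_wedge_curve[OF assms, of 1] assms(1)]]
  by (simp add: add.commute)

end

definition euler_lagrange_term ::
    "('n::finite mat \<Rightarrow> 'n mat) \<Rightarrow> real \<Rightarrow> real^'n \<Rightarrow> real^'n \<Rightarrow> real^'n \<Rightarrow> real^'n" where
  "euler_lagrange_term A \<epsilon> x v a =
     (1 / \<epsilon>^2) *\<^sub>R (A (wedge x a) *v x) + (1 / \<epsilon>^3) *\<^sub>R (A (wedge x v) *v v)"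

lemma (in inertia_operator) delta_l_minus_JK_eq_euler_lagrange_term:
  assumes "\<epsilon> \<noteq> 0"
    and "(\<gamma> has_vector_derivative v t) (at t)" and "(v has_vector_derivative a) (at t)"
  shows "delta_l (lagr A \<epsilon>) \<gamma> v t \<delta> - JK A \<epsilon> (\<gamma> t) (v t) \<delta>
    = euler_lagrange_term A \<epsilon> (\<gamma> t) (v t) a \<bullet> \<delta>"
proof -
  define P where "P = (A (wedge (\<gamma> t) a) *v \<gamma> t) \<bullet> \<delta>"
  define Q where "Q = (A (wedge (\<gamma> t) (v t)) *v v t) \<bullet> \<delta>"
  have delta_l: "delta_l (lagr A \<epsilon>) \<gamma> v t \<delta> = Q / \<epsilon>^2 + (P + Q) / \<epsilon>^2"
    unfolding delta_l_def partial1_lagr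
      vector_derivative_at[OF has_vector_derivative_partial2_lagr[OF assms(2,3)]]
    by (simp add: P_def Q_def inner_diff_left inner_add_left add_divide_distrib)
  have JK: "JK A \<epsilon> (\<gamma> t) (v t) \<delta> = (2*\<epsilon> - 1) / \<epsilon>^3 * Q"
    by (simp add: JK_def Q_def)
  have euler_lagrange: "euler_lagrange_term A \<epsilon> (\<gamma> t) (v t) a \<bullet> \<delta> = P / \<epsilon>^2 + Q / \<epsilon>^3"
    by (simp add: euler_lagrange_term_def P_def Q_def inner_add_left)
  show ?thesis
    unfolding delta_l JK euler_lagrange
    using assms(1) by (simp add: field_simps power2_eq_square power3_eq_cube)
qed

lemma (in inertia_operator) euler_lagrange_term_eq_gyro_f:
  fixes x v a \<delta> :: "real^'n" and \<epsilon> :: real and \<kappa> \<Lambda> :: "'n mat"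
  defines "\<omega> \<equiv> (1/\<epsilon>) *\<^sub>R wedge x v"
  assumes eps: "\<epsilon> \<noteq> 0" and \<kappa>: "\<kappa> \<in> so" and \<Lambda>: "\<Lambda> *v x = 0" and \<delta>: "\<delta> \<bullet> x = 0"
    and motion: "A (wedge x a) = \<epsilon> *\<^sub>R (comm (A \<omega>) \<omega> + comm \<kappa> \<omega> + \<Lambda>)"
    and kinematics: "v = - \<epsilon> *\<^sub>R (\<omega> *v x)"
  shows "euler_lagrange_term A \<epsilon> x v a \<bullet> \<delta> = gyro_f \<kappa> \<epsilon> v \<delta>"
proof -
  define W where "W = A \<omega>"
  have "\<omega> \<in> so"
    by (simp add: \<omega>_def so_scaleR wedge_in_so)
  then have W_skew: "transpose W = - W"
    by (simp add: W_def so_skew maps_so)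
  have A_wedge: "A (wedge x v) = \<epsilon> *\<^sub>R W"
    using eps by (simp add: W_def \<omega>_def scaleR wedge_in_so)
  have \<omega>_x: "\<omega> *v x = - (1/\<epsilon>) *\<^sub>R v"
    using eps by (simp add: kinematics)
  have \<omega>_inner: "(\<omega> *v y) \<bullet> \<delta> = - (1/\<epsilon>) * (x \<bullet> y) * (v \<bullet> \<delta>)" for y
    unfolding \<omega>_def scaleR_matrix_vector_assoc[symmetric] wedge_mult_vec
    using \<delta> by (simp add: inner_diff_left inner_commute[of x \<delta>] inner_commute[of v \<delta>])
  have \<omega>_W_x: "(\<omega> *v (W *v x)) \<bullet> \<delta> = 0"
    using \<omega>_inner skew_mult_vec_inner_self[OF W_skew] by (simp add: inner_commute)
  have \<omega>_\<kappa>_x: "(\<omega> *v (\<kappa> *v x)) \<bullet> \<delta> = 0"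
    using \<omega>_inner skew_mult_vec_inner_self[OF so_skew[OF \<kappa>]] by (simp add: inner_commute)
  have motion_term: "(A (wedge x a) *v x) \<bullet> \<delta> = - ((W *v v) \<bullet> \<delta>) - (\<kappa> *v v) \<bullet> \<delta>"
    unfolding motion W_def[symmetric] scaleR_matrix_vector_assoc[symmetric]
    using eps \<omega>_W_x \<omega>_\<kappa>_x
    by (simp add: \<Lambda> \<omega>_x comm_mult_vec matrix_vector_mult_add_rdistrib matrix_vector_mult_scaleR
        matrix_vector_mult_uminus_right inner_add_left inner_diff_left field_simps)
  have inertia_term: "(A (wedge x v) *v v) \<bullet> \<delta> = \<epsilon> * ((W *v v) \<bullet> \<delta>)"
    by (simp add: A_wedge scaleR_matrix_vector_assoc[symmetric])
  have gyro_term: "v \<bullet> (\<kappa> *v \<delta>) = - ((\<kappa> *v v) \<bullet> \<delta>)"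
    using skew_mult_vec_inner[OF so_skew[OF \<kappa>], of \<delta> v] by (simp add: inner_commute)
  show ?thesis
    unfolding euler_lagrange_term_def gyro_f_def inner_add_left inner_scaleR_left
      motion_term inertia_term gyro_term
    using eps by (simp add: field_simps power2_eq_square power3_eq_cube)
qed

theorem proposition7p3:
  fixes II :: "'n::finite mat \<Rightarrow> 'n mat"
    and \<kappa> :: "'n mat"
    and a b m \<epsilon> :: real
    and \<gamma> \<gamma>' \<gamma>'' :: "real \<Rightarrow> real^'n"
    and lam0 :: "real \<Rightarrow> 'n mat"
  assumes dim: "CARD('n) \<ge> 3"
    and a_pos: "a > 0" and b_pos: "b > 0" and m_pos: "m > 0"
    and eps: "\<epsilon> = b / (b + a) \<or> (b \<noteq> a \<and> \<epsilon> = b / (b - a))"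
    and II_so: "\<forall>X\<in>so. II X \<in> so"
    and II_add: "\<forall>X\<in>so. \<forall>Y\<in>so. II (X + Y) = II X + II Y"
    and II_scale: "\<forall>X\<in>so. \<forall>c. II (c *\<^sub>R X) = c *\<^sub>R II X"
    and I_sym: "\<forall>X\<in>so. \<forall>Y\<in>so.
        so_inner (boldI II (m * a^2) X) Y = so_inner X (boldI II (m * a^2) Y)"
    and I_posdef: "\<forall>X\<in>so. X \<noteq> 0 \<longrightarrow> so_inner (boldI II (m * a^2) X) X > 0"
    and kappa: "\<kappa> \<in> so"
    and sphere: "\<forall>t. norm (\<gamma> t) = 1"
    and d1: "\<forall>t. (\<gamma> has_vector_derivative \<gamma>' t) (at t)"
    and d2: "\<forall>t. (\<gamma>' has_vector_derivative \<gamma>'' t) (at t)"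
    and lam_so: "\<forall>t. lam0 t \<in> so"
    and lam_orth: "\<forall>t. \<forall>x. so_inner (lam0 t) (wedge x (\<gamma> t)) = 0"
    and eq_motion: "\<forall>t. ((\<lambda>s. boldI II (m * a^2) ((1/\<epsilon>) *\<^sub>R wedge (\<gamma> s) (\<gamma>' s)))
        has_vector_derivative
          (comm (boldI II (m * a^2) ((1/\<epsilon>) *\<^sub>R wedge (\<gamma> t) (\<gamma>' t)))
                ((1/\<epsilon>) *\<^sub>R wedge (\<gamma> t) (\<gamma>' t))
           + comm \<kappa> ((1/\<epsilon>) *\<^sub>R wedge (\<gamma> t) (\<gamma>' t)) + lam0 t)) (at t)"
    and eq_kin: "\<forall>t. \<gamma>' t = - \<epsilon> *\<^sub>R (((1/\<epsilon>) *\<^sub>R wedge (\<gamma> t) (\<gamma>' t)) *v \<gamma> t)"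
  shows "\<forall>t. \<forall>\<delta>\<gamma>. \<delta>\<gamma> \<bullet> \<gamma> t = 0 \<longrightarrow>
     (let IB = boldI II (m * a^2);
          rhs = (1 / \<epsilon>^2) *\<^sub>R (IB (wedge (\<gamma> t) (\<gamma>'' t)) *v \<gamma> t)
              + (1 / \<epsilon>^3) *\<^sub>R (IB (wedge (\<gamma> t) (\<gamma>' t)) *v \<gamma>' t)
      in delta_l (lagr IB \<epsilon>) \<gamma> \<gamma>' t \<delta>\<gamma> - JK IB \<epsilon> (\<gamma> t) (\<gamma>' t) \<delta>\<gamma> = rhs \<bullet> \<delta>\<gamma>
         \<and> rhs \<bullet> \<delta>\<gamma> = gyro_f \<kappa> \<epsilon> (\<gamma>' t) \<delta>\<gamma>)"
proof (intro allI impI, goal_cases)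
  case (1 t \<delta>\<gamma>)
  let ?IB = "boldI II (m * a^2)"
  interpret inertia_operator ?IB
    using II_so II_add II_scale I_sym
    by unfold_locales (auto simp: boldI_def so_add so_scaleR scaleR_right_distrib)
  have \<epsilon>: "\<epsilon> \<noteq> 0"
    using eps a_pos b_pos by auto
  define \<omega> where "\<omega> = (1/\<epsilon>) *\<^sub>R wedge (\<gamma> t) (\<gamma>' t)"
  have motion_scaled: "(1/\<epsilon>) *\<^sub>R ?IB (wedge (\<gamma> t) (\<gamma>'' t)) = comm (?IB \<omega>) \<omega> + comm \<kappa> \<omega> + lam0 t"
    unfolding \<omega>_def
    by (rule vector_derivative_unique_at
        [OF has_vector_derivative_wedge_curve eq_motion[rule_format]]) (use d1 d2 in auto)
  have motion: "?IB (wedge (\<gamma> t) (\<gamma>'' t)) = \<epsilon> *\<^sub>R (comm (?IB \<omega>) \<omega> + comm \<kappa> \<omega> + lam0 t)"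
    using \<epsilon> by (simp flip: motion_scaled)
  have lam0_\<gamma>: "lam0 t *v \<gamma> t = 0"
    using lam_so lam_orth by (intro so_mult_vec_eq_0_if_orthogonal_wedges) auto
  show ?case
    unfolding Let_def euler_lagrange_term_def[symmetric]
    using delta_l_minus_JK_eq_euler_lagrange_term[OF \<epsilon> d1[rule_format] d2[rule_format]]
      euler_lagrange_term_eq_gyro_f[OF \<epsilon> kappa lam0_\<gamma> \<open>\<delta>\<gamma> \<bullet> \<gamma> t = 0\<close>
        motion[unfolded \<omega>_def] eq_kin[rule_format]]
    by simp
qed

end
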